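(* A finitely branching directed graph is locally finite if and only if it contains no quasicycles.
   Context: For a directed graph $G$ and vertices $s,t$, $G(s,t)$ denotes the set of directed paths from $s$ to $t$; $G$ is locally finite if $G(s,t)$ is finite for all vertices $s,t$. $G$ is finitely branching if for every vertex $s$ the set $\{t : G \text{ contains an edge } s\to t\}$ is finite. A quasicycle in $G$ is a pair $(T,t)$ where $T$ is an infinite chain $t_0\to t_1\to t_2\to\cdots$ in $G$, $t$ is a vertex of $G$, and $G$ contains a path $t_i\to t$ for every $i\in\mathbb{N}$. *)

theory Defs
  imports Main
begin

definition is_path :: "('a \<Rightarrow> 'a \<Rightarrow> bool) \<Rightarrow> 'a list \<Rightarrow> bool" where
  "is_path E p \<longleftrightarrow> p \<noteq> [] \<and> (\<forall>i. Suc i < length p \<longrightarrow> E (p ! i) (p ! Suc i))"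

definition paths :: "('a \<Rightarrow> 'a \<Rightarrow> bool) \<Rightarrow> 'a \<Rightarrow> 'a \<Rightarrow> 'a list set" where
  "paths E s t = {p. is_path E p \<and> hd p = s \<and> last p = t}"

definition locally_finite :: "('a \<Rightarrow> 'a \<Rightarrow> bool) \<Rightarrow> bool" where
  "locally_finite E \<longleftrightarrow> (\<forall>s t. finite (paths E s t))"

definition finitely_branching :: "('a \<Rightarrow> 'a \<Rightarrow> bool) \<Rightarrow> bool" where
  "finitely_branching E \<longleftrightarrow> (\<forall>s. finite {t. E s t})"

definition quasicycle :: "('a \<Rightarrow> 'a \<Rightarrow> bool) \<Rightarrow> (nat \<Rightarrow> 'a) \<Rightarrow> 'a \<Rightarrow> bool" where
  "quasicycle E T t \<longleftrightarrow> (\<forall>i. E (T i) (T (Suc i))) \<and> (\<forall>i. paths E (T i) t \<noteq> {})"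

end

theory Submission
  imports Defs
begin

text \<open>If the graph contains a quasicycle \<open>(T, t)\<close>, prepending the chain
  \<open>T 0 \<rightarrow> \<dots> \<rightarrow> T n\<close> to a path from \<open>T n\<close> to \<open>t\<close> yields arbitrarily long paths from
  \<open>T 0\<close> to \<open>t\<close>, so the graph is not locally finite. Conversely, a path from \<open>u\<close>
  to \<open>t\<close> is either \<open>[u]\<close> or starts with an edge \<open>u \<rightarrow> v\<close>; as \<open>u\<close> has only finitely
  many successors, infinitely many paths from \<open>u\<close> to \<open>t\<close> force infinitely many
  paths from some successor \<open>v\<close> to \<open>t\<close>. Iterating this (Koenig's lemma) gives an
  infinite chain every member of which reaches \<open>t\<close>: a quasicycle.\<close>

lemma paths_nonempty: "p \<in> paths E s t \<Longrightarrow> p \<noteq> []"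
  by (simp add: paths_def is_path_def)

lemma Cons_in_paths:
  assumes "E u v" and "p \<in> paths E v t"
  shows "u # p \<in> paths E u t"
proof -
  have p: "is_path E p" "hd p = v" "last p = t" "p \<noteq> []"
    using assms(2) by (auto simp: paths_def is_path_def)
  have "E ((u # p) ! i) ((u # p) ! Suc i)" if "Suc i < length (u # p)" for i
  proof (cases i)
    case 0
    then show ?thesis using p assms(1) by (simp add: hd_conv_nth)
  next
    case (Suc k)
    then show ?thesis using p that by (simp add: is_path_def)
  qed
  then show ?thesis using p by (simp add: paths_def is_path_def)
qed

lemma paths_subset_Cons_paths:
  "paths E u t \<subseteq> {[u]} \<union> (\<Union>v\<in>{v. E u v}. (#) u ` paths E v t)"
proof
  fix p assume p: "p \<in> paths E u t"
  then obtain q where pq: "p = u # q"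
    by (cases p) (auto simp: paths_def is_path_def)
  show "p \<in> {[u]} \<union> (\<Union>v\<in>{v. E u v}. (#) u ` paths E v t)"
  proof (cases q)
    case Nil
    then show ?thesis using pq by simp
  next
    case (Cons v r)
    have edges: "E (p ! i) (p ! Suc i)" if "Suc i < length p" for i
      using p that by (simp add: paths_def is_path_def)
    have "E u v" using edges[of 0] pq Cons by simp
    moreover have "E (q ! i) (q ! Suc i)" if "Suc i < length q" for i
      using edges[of "Suc i"] pq that by simp
    then have "q \<in> paths E v t"
      using p pq Cons by (simp add: paths_def is_path_def)
    ultimately show ?thesis using pq by auto
  qed
qed

lemma infinite_paths_successor:
  assumes "finite {v. E u v}" and "infinite (paths E u t)"
  shows "\<exists>v. E u v \<and> infinite (paths E v t)"
proof (rule ccontr)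
  assume "\<not> ?thesis"
  then have "finite (\<Union>v\<in>{v. E u v}. (#) u ` paths E v t)"
    using assms(1) by blast
  then have "finite (paths E u t)"
    by (rule finite_subset[OF paths_subset_Cons_paths, simplified])
  with assms(2) show False by contradiction
qed

lemma infinite_paths_imp_quasicycle:
  assumes "finitely_branching E" and "infinite (paths E s t)"
  shows "\<exists>T. quasicycle E T t"
proof -
  have "\<exists>T. \<forall>n. infinite (paths E (T n) t) \<and> E (T n) (T (Suc n))"
    using assms infinite_paths_successor[of E _ t]
    by (intro dependent_nat_choice) (auto simp: finitely_branching_def)
  then obtain T where T: "\<forall>n. infinite (paths E (T n) t) \<and> E (T n) (T (Suc n))" ..
  then have "paths E (T n) t \<noteq> {}" for n
    by (metis finite.emptyI)
  with T have "quasicycle E T t"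
    by (simp add: quasicycle_def)
  then show ?thesis by blast
qed

lemma quasicycle_long_paths:
  assumes "quasicycle E T t"
  shows "\<exists>p\<in>paths E (T j) t. n < length p"
proof (induction n arbitrary: j)
  case 0
  then show ?case
    using assms paths_nonempty by (fastforce simp: quasicycle_def)
next
  case (Suc n)
  then obtain p where "p \<in> paths E (T (Suc j)) t" "n < length p" by blast
  moreover have "E (T j) (T (Suc j))"
    using assms by (simp add: quasicycle_def)
  ultimately have "T j # p \<in> paths E (T j) t"
    by (simp add: Cons_in_paths)
  with \<open>n < length p\<close> show ?case by force
qed

lemma quasicycle_infinite_paths:
  assumes "quasicycle E T t"
  shows "infinite (paths E (T 0) t)"
proof
  assume "finite (paths E (T 0) t)"
  then obtain m where "\<forall>p\<in>paths E (T 0) t. length p \<le> m"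
    using finite_nat_set_iff_bounded_le[of "length ` paths E (T 0) t"] by auto
  with quasicycle_long_paths[OF assms, of 0 m] show False by auto
qed

theorem lemma3p14:
  fixes E :: "'a \<Rightarrow> 'a \<Rightarrow> bool"
  assumes "finitely_branching E"
  shows "locally_finite E \<longleftrightarrow> \<not> (\<exists>T t. quasicycle E T t)"
  unfolding locally_finite_def
  using quasicycle_infinite_paths infinite_paths_imp_quasicycle[OF assms] by metis

end
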